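(* Let $\xi_1,\xi_2,\ldots$ be i.i.d.\ nonnegative real random variables with $\overline F(x):=\P(\xi_1\geq x)=x^{-1}\ell(x)$ for $x\to\infty$, where $\ell$ is slowly varying. Let $G(x):=\int_0^x\overline F(t)\,dt$ and $S_k:=\sum_{i=1}^k\xi_i$. Let $(x_n)_{n\geq1}$ be a positive sequence with $\liminf_{n\to\infty}\frac{x_n}{nG(x_n)}>0$ and let $(a_n)_{n\geq1}$ be a positive sequence with $\lim_{n\to\infty}a_n\in(0,\infty)$. Let $(y_n)_{n\geq1}$ be a positive sequence such that, as $n\to\infty$: $y_n\to\infty$, $y_n=o(x_n)$, $ny_n^2\overline F(x_n)\to0$, $\overline F(x_n/y_n)\sim y_n\overline F(x_n)$, and $G(x_n/y_n)\sim G(x_n)$. Let $C>0$ be a constant such that $$\operatorname{Var}\left(\xi_1\mathbf 1_{\{\xi_1<x_n/y_n\}}\right)\leq C\,\frac{x_n^2\overline F(x_n)}{y_n}\quad\text{for all } n\geq1.$$ Then for all $n$ large enough, $$\P(S_k-kG(x_n)\leq -a_nx_n)\leq \frac{4Ck\overline F(x_n)}{a_n^2y_n}\quad\text{for all }1\leq k\leq n.$$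
   Context: A function $\ell$ is slowly varying if $\ell(\lambda x)/\ell(x)\to1$ as $x\to\infty$ for every $\lambda>0$. For sequences, $u_n\sim v_n$ means $u_n/v_n\to1$ as $n\to\infty$. *)

theory Defs
  imports "HOL-Probability.Probability" "HOL-Library.Landau_Symbols"
begin

definition slowly_varying :: "(real \<Rightarrow> real) \<Rightarrow> bool" where
  "slowly_varying l \<longleftrightarrow> (\<forall>c>0. ((\<lambda>x. l (c * x) / l x) \<longlongrightarrow> 1) at_top)"

definition tail_prob :: "'a measure \<Rightarrow> ('a \<Rightarrow> real) \<Rightarrow> real \<Rightarrow> real" where
  "tail_prob M X x = measure M {\<omega> \<in> space M. X \<omega> \<ge> x}"

definition integrated_tail :: "'a measure \<Rightarrow> ('a \<Rightarrow> real) \<Rightarrow> real \<Rightarrow> real" where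
  "integrated_tail M X x = (LBINT t=0..x. tail_prob M X t)"

end

theory Submission
  imports Defs
begin

(* Truncate at level z = x_n / y_n: the variables T_i = xi_i 1{xi_i < z} are i.i.d., bounded by z,
   dominated by xi_i, and by the layer-cake formula E T_i = G(z) - z Fbar(z). So whenever
   k (G(x_n) - E T_1) <= a_n x_n / 2, the event S_k - k G(x_n) <= -a_n x_n forces the truncated sum
   a_n x_n / 2 below its mean, and Chebyshev's inequality bounds its probability by
   4 k Var(T_1) / (a_n x_n)^2. That centering condition holds eventually, uniformly in k <= n,
   because n (G(x_n) - G(z)) = o(n G(x_n)) = o(x_n) and n z Fbar(z) ~ n x_n Fbar(x_n) = o(x_n). *)

context prob_space
begin

lemma antimono_tail_prob:
  assumes [measurable]: "X \<in> borel_measurable M"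
  shows "antimono (tail_prob M X)"
  unfolding antimono_def tail_prob_def by (auto intro!: finite_measure_mono)

lemma borel_measurable_tail_prob [measurable]:
  assumes "X \<in> borel_measurable M"
  shows "tail_prob M X \<in> borel_measurable borel"
proof -
  have "mono (\<lambda>t. - tail_prob M X t)"
    using antimono_tail_prob[OF assms] by (auto simp: mono_def antimono_def)
  then have "(\<lambda>t. - (- tail_prob M X t)) \<in> borel_measurable borel"
    using borel_measurable_mono borel_measurable_uminus by blast
  then show ?thesis
    by simp
qed

lemma nn_integral_tail_prob:
  assumes [measurable]: "X \<in> borel_measurable M" and "0 \<le> z"
  shows "(\<integral>\<^sup>+t. indicator {0..z} t * emeasure M {\<omega>\<in>space M. t \<le> X \<omega>} \<partial>lborel)
       = (\<integral>\<^sup>+\<omega>. ennreal (max 0 (min (X \<omega>) z)) \<partial>M)"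
proof -
  interpret pair_sigma_finite lborel M ..
  define A where "A = {p \<in> space (lborel \<Otimes>\<^sub>M M). 0 \<le> fst p \<and> fst p \<le> z \<and> fst p \<le> X (snd p)}"
  have [measurable]: "A \<in> sets (lborel \<Otimes>\<^sub>M M)"
    unfolding A_def by measurable
  have integral_over_M: "(\<integral>\<^sup>+\<omega>. indicator A (t, \<omega>) \<partial>M)
      = indicator {0..z} t * emeasure M {\<omega>\<in>space M. t \<le> X \<omega>}" for t
  proof -
    have "(\<integral>\<^sup>+\<omega>. indicator A (t, \<omega>) \<partial>M)
        = (\<integral>\<^sup>+\<omega>. indicator {0..z} t * indicator {\<omega>\<in>space M. t \<le> X \<omega>} \<omega> \<partial>M)"
      by (intro nn_integral_cong) (auto simp: A_def indicator_def space_pair_measure)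
    then show ?thesis
      by (simp add: nn_integral_cmult)
  qed
  have integral_over_lborel: "(\<integral>\<^sup>+t. indicator A (t, \<omega>) \<partial>lborel) = ennreal (max 0 (min (X \<omega>) z))"
    if "\<omega> \<in> space M" for \<omega>
  proof -
    have "(\<integral>\<^sup>+t. indicator A (t, \<omega>) \<partial>lborel) = (\<integral>\<^sup>+t. indicator {0..min z (X \<omega>)} t \<partial>lborel)"
      using that by (intro nn_integral_cong) (auto simp: A_def indicator_def space_pair_measure)
    then show ?thesis
      using \<open>0 \<le> z\<close> by (simp add: emeasure_lborel_Icc_eq min.commute min_def ennreal_neg)
  qed
  have "(\<integral>\<^sup>+t. indicator {0..z} t * emeasure M {\<omega>\<in>space M. t \<le> X \<omega>} \<partial>lborel)
      = (\<integral>\<^sup>+t. \<integral>\<^sup>+\<omega>. indicator A (t, \<omega>) \<partial>M \<partial>lborel)"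
    by (simp add: integral_over_M)
  also have "\<dots> = (\<integral>\<^sup>+\<omega>. \<integral>\<^sup>+t. indicator A (t, \<omega>) \<partial>lborel \<partial>M)"
    by (rule Fubini'[symmetric]) (simp add: case_prod_beta')
  also have "\<dots> = (\<integral>\<^sup>+\<omega>. ennreal (max 0 (min (X \<omega>) z)) \<partial>M)"
    by (intro nn_integral_cong) (simp add: integral_over_lborel)
  finally show ?thesis .
qed

lemma integrated_tail_eq_expectation:
  assumes [measurable]: "X \<in> borel_measurable M" and "0 \<le> z"
  shows "integrated_tail M X z = expectation (\<lambda>\<omega>. max 0 (min (X \<omega>) z))"
proof -
  have integral_lborel: "integrated_tail M X z = (\<integral>t. indicator {0..z} t * tail_prob M X t \<partial>lborel)"
    using interval_integral_Icc[OF \<open>0 \<le> z\<close>, of "tail_prob M X"]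
    by (simp add: integrated_tail_def set_lebesgue_integral_def zero_ereal_def)
  have "integrable lborel (\<lambda>t. indicator {0..z} t * tail_prob M X t)"
  proof (rule Bochner_Integration.integrable_bound)
    show "integrable lborel (indicator {0..z} :: real \<Rightarrow> real)"
      by (rule integrable_real_indicator) (auto simp: emeasure_lborel_Icc_eq)
    show "AE t in lborel. norm (indicator {0..z} t * tail_prob M X t) \<le> norm (indicator {0..z} t :: real)"
      by (auto simp: tail_prob_def indicator_def)
  qed measurable
  then have "ennreal (integrated_tail M X z)
      = (\<integral>\<^sup>+t. indicator {0..z} t * emeasure M {\<omega>\<in>space M. t \<le> X \<omega>} \<partial>lborel)"
    unfolding integral_lborel
    by (subst nn_integral_eq_integral[symmetric])
       (auto simp: tail_prob_def emeasure_eq_measure ennreal_mult' indicator_def intro!: nn_integral_cong)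
  also have "\<dots> = (\<integral>\<^sup>+\<omega>. ennreal (max 0 (min (X \<omega>) z)) \<partial>M)"
    by (rule nn_integral_tail_prob) fact+
  also have "\<dots> = ennreal (expectation (\<lambda>\<omega>. max 0 (min (X \<omega>) z)))"
    using \<open>0 \<le> z\<close> by (intro nn_integral_eq_integral integrable_const_bound[where B=z]) auto
  finally show ?thesis
    using \<open>0 \<le> z\<close>
    by (subst (asm) ennreal_inj) (auto simp: integral_lborel tail_prob_def intro!: integral_nonneg_AE)
qed

lemma expectation_truncation:
  assumes [measurable]: "X \<in> borel_measurable M"
    and "AE \<omega> in M. 0 \<le> X \<omega>" and "0 \<le> z"
  shows "expectation (\<lambda>\<omega>. X \<omega> * indicator {..<z} (X \<omega>))
       = integrated_tail M X z - z * tail_prob M X z"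
proof -
  have [measurable]: "{\<omega>\<in>space M. z \<le> X \<omega>} \<in> events"
    by measurable
  have "integrated_tail M X z
      = expectation (\<lambda>\<omega>. X \<omega> * indicator {..<z} (X \<omega>) + z * indicator {\<omega>\<in>space M. z \<le> X \<omega>} \<omega>)"
    unfolding integrated_tail_eq_expectation[OF assms(1,3)]
  proof (rule integral_cong_AE)
    show "AE \<omega> in M. max 0 (min (X \<omega>) z)
        = X \<omega> * indicator {..<z} (X \<omega>) + z * indicator {\<omega>\<in>space M. z \<le> X \<omega>} \<omega>"
      using assms(2) AE_space by eventually_elim (use \<open>0 \<le> z\<close> in \<open>auto simp: indicator_def\<close>)
  qed measurable
  also have "\<dots> = expectation (\<lambda>\<omega>. X \<omega> * indicator {..<z} (X \<omega>)) + z * tail_prob M X z"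
  proof (subst Bochner_Integration.integral_add)
    show "integrable M (\<lambda>\<omega>. X \<omega> * indicator {..<z} (X \<omega>))"
      using assms(2) \<open>0 \<le> z\<close>
      by (intro integrable_const_bound[where B=z]) (auto elim!: eventually_mono simp: indicator_def)
  qed (auto simp: tail_prob_def emeasure_eq_measure)
  finally show ?thesis
    by simp
qed

lemma expectation_comp_eq_if_distr_eq:
  fixes X Y :: "'a \<Rightarrow> real" and h :: "real \<Rightarrow> real"
  assumes "distr M borel X = distr M borel Y"
    and [measurable]: "X \<in> borel_measurable M" "Y \<in> borel_measurable M" "h \<in> borel_measurable borel"
  shows "expectation (\<lambda>\<omega>. h (X \<omega>)) = expectation (\<lambda>\<omega>. h (Y \<omega>))"
  using integral_distr[of X M borel h] integral_distr[of Y M borel h] assms by simp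

lemma variance_comp_eq_if_distr_eq:
  fixes X Y :: "'a \<Rightarrow> real" and h :: "real \<Rightarrow> real"
  assumes "distr M borel X = distr M borel Y"
    and [measurable]: "X \<in> borel_measurable M" "Y \<in> borel_measurable M" "h \<in> borel_measurable borel"
  shows "variance (\<lambda>\<omega>. h (X \<omega>)) = variance (\<lambda>\<omega>. h (Y \<omega>))"
proof -
  have "expectation (\<lambda>\<omega>. (h (X \<omega>) - m)\<^sup>2) = expectation (\<lambda>\<omega>. (h (Y \<omega>) - m)\<^sup>2)" for m
    using assms(1) by (rule expectation_comp_eq_if_distr_eq[where h="\<lambda>t. (h t - m)\<^sup>2"]) measurable
  moreover have "expectation (\<lambda>\<omega>. h (X \<omega>)) = expectation (\<lambda>\<omega>. h (Y \<omega>))"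
    using assms by (rule expectation_comp_eq_if_distr_eq)
  ultimately show ?thesis
    by simp
qed

lemma indep_vars_expectation_mult:
  fixes Y :: "'i \<Rightarrow> 'a \<Rightarrow> real"
  assumes "indep_vars (\<lambda>_. borel) Y J" "i \<in> J" "j \<in> J" "i \<noteq> j"
    and "integrable M (Y i)" "integrable M (Y j)"
  shows "integrable M (\<lambda>\<omega>. Y i \<omega> * Y j \<omega>)"
    and "expectation (\<lambda>\<omega>. Y i \<omega> * Y j \<omega>) = expectation (Y i) * expectation (Y j)"
proof -
  have indep: "indep_vars (\<lambda>_. borel) Y {i, j}"
    using assms(1) by (rule indep_vars_subset) (use assms(2,3) in auto)
  have int: "\<And>l. l \<in> {i, j} \<Longrightarrow> integrable M (Y l)"
    using assms(5,6) by auto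
  show "integrable M (\<lambda>\<omega>. Y i \<omega> * Y j \<omega>)"
    using indep_vars_integrable[OF _ indep int] assms(4) by simp
  show "expectation (\<lambda>\<omega>. Y i \<omega> * Y j \<omega>) = expectation (Y i) * expectation (Y j)"
    using indep_vars_lebesgue_integral[OF _ indep int] assms(4) by simp
qed

lemma variance_sum_indep_vars:
  fixes Y :: "'i \<Rightarrow> 'a \<Rightarrow> real"
  assumes "finite J" and indep: "indep_vars (\<lambda>_. borel) Y J"
    and square_int: "\<And>i. i \<in> J \<Longrightarrow> integrable M (\<lambda>\<omega>. (Y i \<omega>)\<^sup>2)"
  shows "integrable M (\<lambda>\<omega>. (\<Sum>i\<in>J. Y i \<omega>)\<^sup>2)"
    and "variance (\<lambda>\<omega>. \<Sum>i\<in>J. Y i \<omega>) = (\<Sum>i\<in>J. variance (Y i))"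
proof -
  have [measurable]: "Y i \<in> borel_measurable M" if "i \<in> J" for i
    using indep that by (auto simp: indep_vars_def)
  have int: "integrable M (Y i)" if "i \<in> J" for i
    using square_integrable_imp_integrable[OF _ square_int[OF that]] that by simp
  have int_mult: "integrable M (\<lambda>\<omega>. Y i \<omega> * Y j \<omega>)" if "i \<in> J" "j \<in> J" for i j
    using that square_int[of i] indep_vars_expectation_mult(1)[OF indep that _ int int]
    by (cases "i = j") (auto simp: power2_eq_square)
  show square_int_sum: "integrable M (\<lambda>\<omega>. (\<Sum>i\<in>J. Y i \<omega>)\<^sup>2)"
    by (simp add: power2_eq_square sum_product int_mult)
  have cross_terms: "(\<Sum>j\<in>J. expectation (\<lambda>\<omega>. Y i \<omega> * Y j \<omega>) - expectation (Y i) * expectation (Y j))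
      = variance (Y i)" if "i \<in> J" for i
  proof -
    have "expectation (\<lambda>\<omega>. Y i \<omega> * Y j \<omega>) = expectation (Y i) * expectation (Y j)"
      if "j \<in> J" "j \<noteq> i" for j
      using indep_vars_expectation_mult(2)[OF indep \<open>i \<in> J\<close> that(1)] that int \<open>i \<in> J\<close> by auto
    then have "(\<Sum>j\<in>J. expectation (\<lambda>\<omega>. Y i \<omega> * Y j \<omega>) - expectation (Y i) * expectation (Y j))
        = (\<Sum>j\<in>J. if j = i then expectation (\<lambda>\<omega>. (Y i \<omega>)\<^sup>2) - (expectation (Y i))\<^sup>2 else 0)"
      by (intro sum.cong) (auto simp: power2_eq_square)
    also have "\<dots> = variance (Y i)"
      using that \<open>finite J\<close> int square_int by (simp add: variance_eq)
    finally show ?thesis .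
  qed
  have "variance (\<lambda>\<omega>. \<Sum>i\<in>J. Y i \<omega>)
      = expectation (\<lambda>\<omega>. (\<Sum>i\<in>J. Y i \<omega>)\<^sup>2) - (expectation (\<lambda>\<omega>. \<Sum>i\<in>J. Y i \<omega>))\<^sup>2"
    using int square_int_sum by (intro variance_eq) auto
  also have "\<dots> = (\<Sum>i\<in>J. \<Sum>j\<in>J. expectation (\<lambda>\<omega>. Y i \<omega> * Y j \<omega>) - expectation (Y i) * expectation (Y j))"
    using int int_mult by (simp add: power2_eq_square sum_product sum_subtractf)
  also have "\<dots> = (\<Sum>i\<in>J. variance (Y i))"
    by (rule sum.cong) (simp_all add: cross_terms)
  finally show "variance (\<lambda>\<omega>. \<Sum>i\<in>J. Y i \<omega>) = (\<Sum>i\<in>J. variance (Y i))" .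
qed

lemma Chebyshev_inequality_sum_lower:
  fixes X Y :: "'i \<Rightarrow> 'a \<Rightarrow> real"
  assumes "finite J" and indep: "indep_vars (\<lambda>_. borel) Y J"
    and square_int: "\<And>i. i \<in> J \<Longrightarrow> integrable M (\<lambda>\<omega>. (Y i \<omega>)\<^sup>2)"
    and dominated: "\<And>i. i \<in> J \<Longrightarrow> AE \<omega> in M. Y i \<omega> \<le> X i \<omega>" and "0 < d"
  shows "prob {\<omega>\<in>space M. (\<Sum>i\<in>J. X i \<omega>) \<le> (\<Sum>i\<in>J. expectation (Y i)) - d}
       \<le> (\<Sum>i\<in>J. variance (Y i)) / d\<^sup>2"
proof -
  have [measurable]: "Y i \<in> borel_measurable M" if "i \<in> J" for i
    using indep that by (auto simp: indep_vars_def)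
  define S where "S \<omega> = (\<Sum>i\<in>J. Y i \<omega>)" for \<omega>
  have [measurable]: "S \<in> borel_measurable M"
    unfolding S_def by measurable
  have ES: "expectation S = (\<Sum>i\<in>J. expectation (Y i))"
    unfolding S_def
    by (intro Bochner_Integration.integral_sum square_integrable_imp_integrable[OF _ square_int]) auto
  have "prob {\<omega>\<in>space M. (\<Sum>i\<in>J. X i \<omega>) \<le> (\<Sum>i\<in>J. expectation (Y i)) - d}
      \<le> prob {\<omega>\<in>space M. d \<le> \<bar>S \<omega> - expectation S\<bar>}"
  proof (rule finite_measure_mono_AE)
    have "AE \<omega> in M. \<forall>i\<in>J. Y i \<omega> \<le> X i \<omega>"
      using dominated \<open>finite J\<close> by (subst AE_finite_all) auto
    then show "AE \<omega> in M. \<omega> \<in> {\<omega>\<in>space M. (\<Sum>i\<in>J. X i \<omega>) \<le> (\<Sum>i\<in>J. expectation (Y i)) - d}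
        \<longrightarrow> \<omega> \<in> {\<omega>\<in>space M. d \<le> \<bar>S \<omega> - expectation S\<bar>}"
    proof eventually_elim
      case (elim \<omega>)
      then have "S \<omega> \<le> (\<Sum>i\<in>J. X i \<omega>)"
        unfolding S_def by (intro sum_mono) auto
      then show ?case
        using ES by auto
    qed
  qed measurable
  also have "\<dots> \<le> variance S / d\<^sup>2"
    using variance_sum_indep_vars(1)[OF assms(1-3)] \<open>0 < d\<close>
    by (intro Chebyshev_inequality) (auto simp: S_def)
  also have "variance S = (\<Sum>i\<in>J. variance (Y i))"
    unfolding S_def by (rule variance_sum_indep_vars(2)[OF assms(1-3)])
  finally show ?thesis .
qed

lemma integrable_square_truncation:
  fixes X :: "'a \<Rightarrow> real"
  assumes [measurable]: "X \<in> borel_measurable M" and "AE \<omega> in M. 0 \<le> X \<omega>"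
  shows "integrable M (\<lambda>\<omega>. (X \<omega> * indicator {..<z} (X \<omega>))\<^sup>2)"
proof (rule integrable_const_bound[where B="z\<^sup>2"])
  show "AE \<omega> in M. norm ((X \<omega> * indicator {..<z} (X \<omega>))\<^sup>2) \<le> z\<^sup>2"
    using assms(2) by (auto elim!: eventually_mono simp: indicator_def power_mono)
qed measurable

lemma truncation_moments_if_distr_eq:
  fixes X Y :: "'a \<Rightarrow> real"
  assumes "distr M borel X = distr M borel Y"
    and [measurable]: "X \<in> borel_measurable M" "Y \<in> borel_measurable M"
    and "AE \<omega> in M. 0 \<le> Y \<omega>" "0 \<le> z"
  shows "expectation (\<lambda>\<omega>. X \<omega> * indicator {..<z} (X \<omega>)) = integrated_tail M Y z - z * tail_prob M Y z"
    and "variance (\<lambda>\<omega>. X \<omega> * indicator {..<z} (X \<omega>)) = variance (\<lambda>\<omega>. Y \<omega> * indicator {..<z} (Y \<omega>))"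
proof -
  have [measurable]: "(\<lambda>t::real. t * indicator {..<z} t) \<in> borel_measurable borel"
    by measurable
  show "expectation (\<lambda>\<omega>. X \<omega> * indicator {..<z} (X \<omega>)) = integrated_tail M Y z - z * tail_prob M Y z"
    using expectation_comp_eq_if_distr_eq[OF assms(1-3), of "\<lambda>t. t * indicator {..<z} t"]
      expectation_truncation[OF assms(3-5)] by simp
  show "variance (\<lambda>\<omega>. X \<omega> * indicator {..<z} (X \<omega>)) = variance (\<lambda>\<omega>. Y \<omega> * indicator {..<z} (Y \<omega>))"
    using variance_comp_eq_if_distr_eq[OF assms(1-3), of "\<lambda>t. t * indicator {..<z} t"] by simp
qed

lemma prob_sum_lower_deviation_truncated:
  fixes \<xi> :: "nat \<Rightarrow> 'a \<Rightarrow> real"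
  assumes indep: "indep_vars (\<lambda>_. borel) \<xi> {1..}"
    and ident: "\<And>i. i \<ge> 1 \<Longrightarrow> distr M borel (\<xi> i) = distr M borel (\<xi> 1)"
    and nonneg: "\<And>i. i \<ge> 1 \<Longrightarrow> AE \<omega> in M. 0 \<le> \<xi> i \<omega>"
    and "0 \<le> z" "0 < d"
    and centering: "real k * (g - (integrated_tail M (\<xi> 1) z - z * tail_prob M (\<xi> 1) z)) \<le> e - d"
    and variance_le: "variance (\<lambda>\<omega>. \<xi> 1 \<omega> * indicator {..<z} (\<xi> 1 \<omega>)) \<le> V"
  shows "prob {\<omega>\<in>space M. (\<Sum>i=1..k. \<xi> i \<omega>) - real k * g \<le> - e} \<le> real k * V / d\<^sup>2"
proof -
  define T where "T i = (\<lambda>\<omega>. \<xi> i \<omega> * indicator {..<z} (\<xi> i \<omega>))" for i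
  have [measurable]: "\<xi> i \<in> borel_measurable M" if "i \<ge> 1" for i
    using indep that by (auto simp: indep_vars_def)
  have indep_T: "indep_vars (\<lambda>_. borel) T {1..k}"
  proof (rule indep_vars_subset)
    show "indep_vars (\<lambda>_. borel) T {1..}"
      unfolding T_def by (rule indep_vars_compose2[OF indep, where Y="\<lambda>_ t. t * indicator {..<z} t"]) auto
  qed auto
  have T_square_int: "integrable M (\<lambda>\<omega>. (T i \<omega>)\<^sup>2)" if "i \<ge> 1" for i
    unfolding T_def using nonneg[OF that] by (rule integrable_square_truncation[rotated]) (use that in measurable)
  have ET: "expectation (T i) = integrated_tail M (\<xi> 1) z - z * tail_prob M (\<xi> 1) z"
    and VT: "variance (T i) = variance (T 1)" if "i \<ge> 1" for i
    unfolding T_def using truncation_moments_if_distr_eq[OF ident[OF that]] that nonneg \<open>0 \<le> z\<close> by auto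
  have "prob {\<omega>\<in>space M. (\<Sum>i=1..k. \<xi> i \<omega>) - real k * g \<le> - e}
      \<le> prob {\<omega>\<in>space M. (\<Sum>i\<in>{1..k}. \<xi> i \<omega>) \<le> (\<Sum>i\<in>{1..k}. expectation (T i)) - d}"
  proof (rule finite_measure_mono)
    have "(\<Sum>i\<in>{1..k}. expectation (T i)) = real k * (integrated_tail M (\<xi> 1) z - z * tail_prob M (\<xi> 1) z)"
      by (simp add: ET)
    then show "{\<omega>\<in>space M. (\<Sum>i=1..k. \<xi> i \<omega>) - real k * g \<le> - e}
        \<subseteq> {\<omega>\<in>space M. (\<Sum>i\<in>{1..k}. \<xi> i \<omega>) \<le> (\<Sum>i\<in>{1..k}. expectation (T i)) - d}"
      using centering by (auto simp: right_diff_distrib)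
  qed measurable
  also have "\<dots> \<le> (\<Sum>i\<in>{1..k}. variance (T i)) / d\<^sup>2"
    using T_square_int nonneg \<open>0 \<le> z\<close>
    by (intro Chebyshev_inequality_sum_lower indep_T \<open>0 < d\<close>)
       (auto elim!: eventually_mono simp: T_def indicator_def)
  also have "(\<Sum>i\<in>{1..k}. variance (T i)) = (\<Sum>i\<in>{1..k}. variance (T 1))"
    by (intro sum.cong refl VT) auto
  also have "\<dots> / d\<^sup>2 \<le> real k * V / d\<^sup>2"
    using variance_le by (intro divide_right_mono) (simp_all add: T_def mult_left_mono)
  finally show ?thesis .
qed

end

lemma bigo_of_liminf_quotient_pos:
  fixes f g :: "nat \<Rightarrow> real"
  assumes "liminf (\<lambda>n. ereal (f n / g n)) > 0"
  shows "g \<in> O(f)"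
proof -
  obtain c where c: "0 < ereal c" "ereal c < liminf (\<lambda>n. ereal (f n / g n))"
    using ereal_dense2[OF assms] by blast
  have "\<forall>\<^sub>F n in sequentially. ereal c < ereal (f n / g n)"
    using c(2) by (rule less_LiminfD)
  then have "\<forall>\<^sub>F n in sequentially. norm (g n) \<le> (1 / c) * norm (f n)"
  proof eventually_elim
    case (elim n)
    then have "c < \<bar>f n\<bar> / \<bar>g n\<bar>" and "g n \<noteq> 0"
      using c(1) by (auto simp flip: abs_divide)
    then show ?case
      using c(1) by (simp add: field_simps)
  qed
  then show ?thesis
    by (rule bigoI)
qed

lemma centering_error_smallo:
  fixes F G :: "real \<Rightarrow> real" and x y :: "nat \<Rightarrow> real"
  assumes x_liminf: "liminf (\<lambda>n. ereal (x n / (real n * G (x n)))) > 0"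
    and y_inf: "filterlim y at_top sequentially"
    and y_sq: "(\<lambda>n. real n * (y n)\<^sup>2 * F (x n)) \<longlonglongrightarrow> 0"
    and F_equiv: "(\<lambda>n. F (x n / y n)) \<sim>[sequentially] (\<lambda>n. y n * F (x n))"
    and G_equiv: "(\<lambda>n. G (x n / y n)) \<sim>[sequentially] (\<lambda>n. G (x n))"
  shows "(\<lambda>n. real n * (G (x n) - G (x n / y n) + x n / y n * F (x n / y n))) \<in> o(x)"
proof -
  have y_pos: "\<forall>\<^sub>F n in sequentially. 0 < y n"
    using y_inf by (simp add: filterlim_at_top_dense)
  have "(\<lambda>n. - (G (x n / y n) - G (x n))) \<in> o(\<lambda>n. G (x n))"
    using asymp_equiv_imp_diff_smallo[OF G_equiv] by (simp only: landau_o.small.uminus_in_iff)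
  then have "(\<lambda>n. real n * - (G (x n / y n) - G (x n))) \<in> o(\<lambda>n. real n * G (x n))"
    by (rule landau_o.small.mult_left)
  also have "(\<lambda>n. real n * G (x n)) \<in> O(x)"
    using x_liminf by (rule bigo_of_liminf_quotient_pos)
  finally have G_part: "(\<lambda>n. real n * (G (x n) - G (x n / y n))) \<in> o(x)"
    by simp
  have "(\<lambda>n. inverse ((y n)\<^sup>2)) \<longlonglongrightarrow> 0"
    by (intro tendsto_inverse_0_at_top filterlim_pow_at_top[OF _ y_inf]) simp
  then have "(\<lambda>n. real n * (y n)\<^sup>2 * F (x n) * inverse ((y n)\<^sup>2)) \<longlonglongrightarrow> 0"
    using tendsto_mult[OF y_sq] by simp
  moreover have "\<forall>\<^sub>F n in sequentially. real n * (y n)\<^sup>2 * F (x n) * inverse ((y n)\<^sup>2) = real n * F (x n)"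
    using y_pos by eventually_elim simp
  ultimately have "(\<lambda>n. real n * F (x n)) \<longlonglongrightarrow> 0"
    by (rule Lim_transform_eventually)
  then have nF_small: "(\<lambda>n. real n * F (x n)) \<in> o(\<lambda>_. 1)"
    by (intro smalloI_tendsto) auto
  have "(\<lambda>n. real n * (x n / y n) * F (x n / y n)) \<in> O(\<lambda>n. real n * (x n / y n) * (y n * F (x n)))"
    using asymp_equiv_imp_bigo[OF F_equiv] by (rule landau_o.big.mult_left)
  also have "\<forall>\<^sub>F n in sequentially. real n * (x n / y n) * (y n * F (x n)) = x n * (real n * F (x n))"
    using y_pos by eventually_elim simp
  also have "(\<lambda>n. x n * (real n * F (x n))) \<in> o(\<lambda>n. x n * 1)"
    using nF_small by (rule landau_o.small.mult_left)
  finally have F_part: "(\<lambda>n. real n * (x n / y n) * F (x n / y n)) \<in> o(x)"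
    by simp
  show ?thesis
    using sum_in_smallo(1)[OF G_part F_part] by (simp add: distrib_left mult.assoc)
qed

lemma eventually_mult_le_half_of_smallo:
  fixes D a x :: "nat \<Rightarrow> real"
  assumes "(\<lambda>n. real n * D n) \<in> o(x)" and "a \<longlonglongrightarrow> L" "0 < L"
    and "\<forall>\<^sub>F n in sequentially. 0 < x n"
  shows "\<forall>\<^sub>F n in sequentially. \<forall>k\<le>n. real k * D n \<le> a n * x n / 2"
proof -
  have "\<forall>\<^sub>F n in sequentially. norm (real n * D n) \<le> L / 4 * norm (x n)"
    using assms(1) by (rule landau_o.smallD) (use \<open>0 < L\<close> in simp)
  moreover have "\<forall>\<^sub>F n in sequentially. L / 2 < a n"
    using assms(2) by (rule order_tendstoD) (use \<open>0 < L\<close> in simp)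
  ultimately show ?thesis
    using assms(4)
  proof eventually_elim
    case (elim n)
    have "real k * D n \<le> a n * x n / 2" if "k \<le> n" for k
    proof (cases "0 \<le> D n")
      case True
      then have "real k * D n \<le> real n * D n"
        using that by (intro mult_right_mono) auto
      also have "\<dots> \<le> L / 4 * x n"
        using elim(1,3) True by simp
      also have "\<dots> \<le> a n * x n / 2"
        using elim(2,3) by (simp add: field_simps)
      finally show ?thesis .
    next
      case False
      then have "real k * D n \<le> 0"
        by (simp add: mult_nonneg_nonpos)
      moreover have "0 < a n * x n"
        using elim(2,3) \<open>0 < L\<close> by simp
      ultimately show ?thesis
        by linarith
    qed
    then show ?case
      by blast
  qed
qed

theorem corollary2:
  fixes M :: "'a measure" and \<xi> :: "nat \<Rightarrow> 'a \<Rightarrow> real"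
    and x a y :: "nat \<Rightarrow> real" and C :: real
  assumes "prob_space M"
    and indep: "prob_space.indep_vars M (\<lambda>_. borel) \<xi> {1..}"
    and ident: "\<And>i. i \<ge> 1 \<Longrightarrow> distr M borel (\<xi> i) = distr M borel (\<xi> 1)"
    and nonneg: "\<And>i. i \<ge> 1 \<Longrightarrow> AE \<omega> in M. \<xi> i \<omega> \<ge> 0"
    and regvar: "\<exists>l. slowly_varying l \<and>
                   (\<forall>\<^sub>F t in at_top. tail_prob M (\<xi> 1) t = l t / t)"
    and x_pos: "\<And>n. n \<ge> 1 \<Longrightarrow> x n > 0"
    and x_liminf: "liminf (\<lambda>n. ereal (x n / (real n * integrated_tail M (\<xi> 1) (x n)))) > 0"
    and a_pos: "\<And>n. n \<ge> 1 \<Longrightarrow> a n > 0"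
    and a_lim: "\<exists>L>0. a \<longlonglongrightarrow> L"
    and y_pos: "\<And>n. n \<ge> 1 \<Longrightarrow> y n > 0"
    and y_inf: "filterlim y at_top sequentially"
    and y_o: "y \<in> o(x)"
    and y_sq: "(\<lambda>n. real n * (y n)\<^sup>2 * tail_prob M (\<xi> 1) (x n)) \<longlonglongrightarrow> 0"
    and F_equiv: "(\<lambda>n. tail_prob M (\<xi> 1) (x n / y n))
                    \<sim>[sequentially] (\<lambda>n. y n * tail_prob M (\<xi> 1) (x n))"
    and G_equiv: "(\<lambda>n. integrated_tail M (\<xi> 1) (x n / y n))
                    \<sim>[sequentially] (\<lambda>n. integrated_tail M (\<xi> 1) (x n))"
    and C_pos: "C > 0"
    and var_bound: "\<And>n. n \<ge> 1 \<Longrightarrow>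
        prob_space.variance M (\<lambda>\<omega>. \<xi> 1 \<omega> * indicator {..< x n / y n} (\<xi> 1 \<omega>))
          \<le> C * (x n)\<^sup>2 * tail_prob M (\<xi> 1) (x n) / y n"
  shows "\<forall>\<^sub>F n in sequentially. \<forall>k\<in>{1..n}.
           measure M {\<omega> \<in> space M.
              (\<Sum>i=1..k. \<xi> i \<omega>) - real k * integrated_tail M (\<xi> 1) (x n) \<le> - a n * x n}
           \<le> 4 * C * real k * tail_prob M (\<xi> 1) (x n) / ((a n)\<^sup>2 * y n)"
proof -
  interpret prob_space M by fact
  define F where "F = tail_prob M (\<xi> 1)"
  define G where "G = integrated_tail M (\<xi> 1)"
  define D where "D n = G (x n) - G (x n / y n) + x n / y n * F (x n / y n)" for n
  obtain L where "0 < L" "a \<longlonglongrightarrow> L"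
    using a_lim by blast
  have "(\<lambda>n. real n * D n) \<in> o(x)"
    unfolding D_def F_def G_def by (rule centering_error_smallo) fact+
  moreover have "\<forall>\<^sub>F n in sequentially. 0 < x n"
    using eventually_ge_at_top[of 1] by eventually_elim (rule x_pos)
  ultimately have "\<forall>\<^sub>F n in sequentially. \<forall>k\<le>n. real k * D n \<le> a n * x n / 2"
    using \<open>a \<longlonglongrightarrow> L\<close> \<open>0 < L\<close> by (intro eventually_mult_le_half_of_smallo)
  then show ?thesis
    using eventually_ge_at_top[of 1]
  proof eventually_elim
    case (elim n)
    have pos: "0 < x n" "0 < a n" "0 < y n"
      using elim(2) x_pos a_pos y_pos by auto
    have "measure M {\<omega> \<in> space M. (\<Sum>i=1..k. \<xi> i \<omega>) - real k * G (x n) \<le> - (a n * x n)}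
        \<le> real k * (C * (x n)\<^sup>2 * F (x n) / y n) / (a n * x n / 2)\<^sup>2" if "k \<le> n" for k
      using elim(1) that pos var_bound[OF elim(2)] unfolding D_def F_def G_def
      by (intro prob_sum_lower_deviation_truncated[OF indep ident nonneg]) (auto simp: algebra_simps)
    moreover have "real k * (C * (x n)\<^sup>2 * F (x n) / y n) / (a n * x n / 2)\<^sup>2
        = 4 * C * real k * F (x n) / ((a n)\<^sup>2 * y n)" for k
      using pos by (simp add: field_simps power2_eq_square)
    ultimately show ?case
      by (simp add: F_def G_def)
  qed
qed

end
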